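(* Let $A\in\mathrm{SL}(2,\mathbb Z)$ and let $W_0=V_0,V_1,\dots,V_m=AW_0$, $m=c(A)$, be the shortest path from $W_0$ to $AW_0$ in $\Gamma$. If $c(A)\le1$, then $A$ is a minimal matrix. If $c(A)>1$, then $A$ is a minimal matrix if and only if $V_{m-1}\ne AV_1$.
   Context: Admissible hexagons are the sets $\{\pm a,\pm b,\pm(a+b)\}\subset\mathbb Z^2$ with $(a,b)$ a basis of $\mathbb Z^2$ (corresponding to isotopy classes of $\theta$-curves in $T^2$). $\Gamma$ is the graph on admissible hexagons, two adjacent iff they share two opposite pairs of vertices $\pm\sigma,\pm\mu$ (a flip); it is a trivalent tree with graph distance $d$, acted on by $\mathrm{SL}(2,\mathbb Z)$. $W_0=\{\pm(1,0),\pm(0,1),\pm(1,-1)\}$ and $c(A)=d(W_0,AW_0)$. For the operator $\mathcal A$ on $\mathbb Z^2$ given by $A$, $c(\mathcal A)=\min_{B\in\mathrm{SL}(2,\mathbb Z)}c(B^{-1}AB)$; a matrix $A$ is minimal if $c(A)=c(\mathcal A)$, i.e. $c(A)\le c(B^{-1}AB)$ for all $B\in\mathrm{SL}(2,\mathbb Z)$. *)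

theory Defs
  imports Main
begin

text \<open>Vectors of Z^2 as pairs of integers; 2x2 integer matrices as tuples
  (a, b, c, d) standing for the matrix with rows (a, b) and (c, d).\<close>

type_synonym vec = "int \<times> int"
type_synonym mat2 = "int \<times> int \<times> int \<times> int"

fun vadd :: "vec \<Rightarrow> vec \<Rightarrow> vec" where
  "vadd (x1, y1) (x2, y2) = (x1 + x2, y1 + y2)"

fun vneg :: "vec \<Rightarrow> vec" where
  "vneg (x, y) = (- x, - y)"

fun vdet :: "vec \<Rightarrow> vec \<Rightarrow> int" where
  "vdet (x1, y1) (x2, y2) = x1 * y2 - y1 * x2"

definition is_basis :: "vec \<Rightarrow> vec \<Rightarrow> bool" where
  "is_basis a b \<longleftrightarrow> \<bar>vdet a b\<bar> = 1"

definition hexagon :: "vec \<Rightarrow> vec \<Rightarrow> vec set" where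
  "hexagon a b = {a, vneg a, b, vneg b, vadd a b, vneg (vadd a b)}"

definition admissible :: "vec set \<Rightarrow> bool" where
  "admissible H \<longleftrightarrow> (\<exists>a b. is_basis a b \<and> H = hexagon a b)"

definition adj :: "vec set \<Rightarrow> vec set \<Rightarrow> bool" where
  "adj H K \<longleftrightarrow> admissible H \<and> admissible K \<and> H \<noteq> K \<and>
     (\<exists>\<sigma> \<mu>. {\<sigma>, vneg \<sigma>, \<mu>, vneg \<mu>} \<subseteq> H \<inter> K \<and> \<mu> \<noteq> \<sigma> \<and> \<mu> \<noteq> vneg \<sigma>)"

definition is_walk :: "vec set list \<Rightarrow> bool" where
  "is_walk Vs \<longleftrightarrow> Vs \<noteq> [] \<and> (\<forall>V\<in>set Vs. admissible V) \<and>
     (\<forall>i. Suc i < length Vs \<longrightarrow> adj (Vs ! i) (Vs ! Suc i))"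

definition dist_G :: "vec set \<Rightarrow> vec set \<Rightarrow> nat" where
  "dist_G H K = (LEAST n. \<exists>Vs. is_walk Vs \<and> length Vs = Suc n \<and> hd Vs = H \<and> last Vs = K)"

fun mat_apply :: "mat2 \<Rightarrow> vec \<Rightarrow> vec" where
  "mat_apply (a, b, c, d) (x, y) = (a * x + b * y, c * x + d * y)"

fun mat_mult :: "mat2 \<Rightarrow> mat2 \<Rightarrow> mat2" where
  "mat_mult (a, b, c, d) (a', b', c', d') =
     (a * a' + b * c', a * b' + b * d', c * a' + d * c', c * b' + d * d')"

fun mat_det :: "mat2 \<Rightarrow> int" where
  "mat_det (a, b, c, d) = a * d - b * c"

definition SL2 :: "mat2 set" where
  "SL2 = {M. mat_det M = 1}"

fun sl2_inv :: "mat2 \<Rightarrow> mat2" where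
  "sl2_inv (a, b, c, d) = (d, - b, - c, a)"

definition act :: "mat2 \<Rightarrow> vec set \<Rightarrow> vec set" where
  "act A H = mat_apply A ` H"

definition W0 :: "vec set" where
  "W0 = {(1, 0), (-1, 0), (0, 1), (0, -1), (1, -1), (-1, 1)}"

definition cplx :: "mat2 \<Rightarrow> nat" where
  "cplx A = dist_G W0 (act A W0)"

definition minimal :: "mat2 \<Rightarrow> bool" where
  "minimal A \<longleftrightarrow> (\<forall>B\<in>SL2. cplx A \<le> cplx (mat_mult (mat_mult (sl2_inv B) A) B))"

end

(* The height of an admissible hexagon is the sum of the form x^2 + xy + y^2 over its six vertices.
   A flip changes the height by an odd multiple of 4, every hexagon has at most one lower neighbour,
   and every hexagon except W0 has one, since a basis admitting no height-lowering flip is reduced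
   and the reduced bases are those of W0. Hence the height along a non-backtracking walk first
   decreases and then increases, which makes non-backtracking walks unique between their endpoints,
   so they are exactly the geodesics of the tree.

   By transitivity of SL(2,Z) on hexagons, A is minimal iff d(H, AH) >= c(A) for every hexagon H.
   If c(A) = 1, a hexagon fixed by A would be equidistant from the adjacent W0 and AW0. If
   V_(m-1) = AV_1, the middle part of the geodesic shows d(V_1, AV_1) <= m - 2. Otherwise the
   A-translates of the geodesic concatenate to non-backtracking walks, so d(W0, A^k W0) = km, and
   km <= 2 d(W0, H) + k d(H, AH) for all k forces d(H, AH) >= m. *)

theory Submission
  imports Defs
begin

lemma vneg_vneg [simp]: "vneg (vneg v) = v"
  by (cases v) simp

lemma vadd_commute: "vadd a b = vadd b a"
  by (cases a; cases b) simp

lemma hexagon_commute: "hexagon a b = hexagon b a"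
  by (auto simp: hexagon_def vadd_commute)

lemma vdet_self_vneg: "vdet a a = 0" "vdet a (vneg a) = 0"
  by (cases a; simp)+

lemma is_basis_not_parallel: "is_basis a b \<Longrightarrow> b \<noteq> a \<and> b \<noteq> vneg a"
  by (auto simp: is_basis_def vdet_self_vneg)

lemma mat_apply_vneg: "mat_apply M (vneg v) = vneg (mat_apply M v)"
  by (cases M; cases v) (simp add: algebra_simps)

lemma mat_apply_vadd: "mat_apply M (vadd u v) = vadd (mat_apply M u) (mat_apply M v)"
  by (cases M; cases u; cases v) (simp add: algebra_simps)

lemma vdet_mat_apply: "vdet (mat_apply M u) (mat_apply M v) = mat_det M * vdet u v"
  by (cases M; cases u; cases v) (simp add: algebra_simps)

lemma mat_apply_mat_mult: "mat_apply (mat_mult M N) v = mat_apply M (mat_apply N v)"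
  by (cases M; cases N; cases v) (simp add: algebra_simps)

lemma mat_det_mat_mult: "mat_det (mat_mult M N) = mat_det M * mat_det N"
  by (cases M; cases N) (simp add: algebra_simps)

text \<open>\<^const>\<open>sl2_inv\<close> is the adjugate, so it inverts every matrix up to the factor
  \<^term>\<open>mat_det M\<close>.\<close>

lemma mat_apply_sl2_inv:
  "mat_apply (sl2_inv M) (mat_apply M v) = (mat_det M * fst v, mat_det M * snd v)"
  "mat_apply M (mat_apply (sl2_inv M) v) = (mat_det M * fst v, mat_det M * snd v)"
  by (cases M; cases v; simp add: algebra_simps)+

lemma inj_mat_apply: "mat_det M \<noteq> 0 \<Longrightarrow> inj (mat_apply M)"
proof (rule injI)
  fix u v assume "mat_det M \<noteq> 0" "mat_apply M u = mat_apply M v"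
  then have "mat_apply (sl2_inv M) (mat_apply M u) = mat_apply (sl2_inv M) (mat_apply M v)"
    by simp
  with \<open>mat_det M \<noteq> 0\<close> show "u = v"
    by (simp add: mat_apply_sl2_inv prod_eq_iff)
qed

lemma act_hexagon: "act M (hexagon u v) = hexagon (mat_apply M u) (mat_apply M v)"
  by (simp add: act_def hexagon_def mat_apply_vneg mat_apply_vadd)

fun basis_mat :: "vec \<Rightarrow> vec \<Rightarrow> mat2" where
  "basis_mat (a1, a2) (b1, b2) = (a1, b1, a2, b2)"

lemma mat_det_basis_mat: "mat_det (basis_mat a b) = vdet a b"
  by (cases a; cases b) simp

lemma mat_apply_basis_mat: "mat_apply (basis_mat a b) (1, 0) = a" "mat_apply (basis_mat a b) (0, 1) = b"
  by (cases a; cases b; simp)+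

abbreviation unit_hexagon :: "vec set" where
  "unit_hexagon \<equiv> hexagon (1, 0) (0, 1)"

lemma hexagon_eq_act_unit: "hexagon a b = act (basis_mat a b) unit_hexagon"
  by (simp add: act_hexagon mat_apply_basis_mat)

lemma unit_hexagon_eq: "unit_hexagon = {(1, 0), (-1, 0), (0, 1), (0, -1), (1, 1), (-1, -1)}"
  by (auto simp: hexagon_def)

section \<open>The hexagonal form and the height of a hexagon\<close>

fun qform :: "vec \<Rightarrow> int" where
  "qform (x, y) = x * x + x * y + y * y"

fun qpolar :: "vec \<Rightarrow> vec \<Rightarrow> int" where
  "qpolar (x1, y1) (x2, y2) = 2 * x1 * x2 + x1 * y2 + y1 * x2 + 2 * y1 * y2"

definition height :: "vec set \<Rightarrow> int" where
  "height H = (\<Sum>v\<in>H. qform v)"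

lemma qform_vadd: "qform (vadd a b) = qform a + qform b + qpolar a b"
  by (cases a; cases b) (simp add: algebra_simps)

lemma qform_nonneg: "qform v \<ge> 0"
proof (cases v)
  case (Pair x y)
  have "4 * qform v = (2 * x + y)\<^sup>2 + 3 * y\<^sup>2"
    using Pair by (simp add: algebra_simps power2_eq_square)
  then show ?thesis using zero_le_power2[of "2 * x + y"] zero_le_power2[of y] by linarith
qed

lemma height_nonneg: "height H \<ge> 0"
  unfolding height_def by (rule sum_nonneg) (rule qform_nonneg)

lemma qform_eq_1: "qform v = 1 \<Longrightarrow> v \<in> W0"
proof (cases v)
  case (Pair x y)
  assume "qform v = 1"
  then have "4 = (2 * x + y)\<^sup>2 + 3 * y\<^sup>2" "4 = (2 * y + x)\<^sup>2 + 3 * x\<^sup>2"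
    using Pair by (simp_all add: algebra_simps power2_eq_square)
  then have "y\<^sup>2 \<le> 1" "x\<^sup>2 \<le> 1"
    using zero_le_power2[of "2 * x + y"] zero_le_power2[of "2 * y + x"] by linarith+
  then have "\<bar>x\<bar> \<le> 1" "\<bar>y\<bar> \<le> 1"
    by (simp_all add: abs_square_le_1)
  then have "x \<in> {-1, 0, 1}" "y \<in> {-1, 0, 1}"
    by auto
  with \<open>qform v = 1\<close> show ?thesis
    unfolding Pair by (simp add: W0_def) (elim disjE; simp)
qed

lemma qpolar_sq: "is_basis a b \<Longrightarrow> (qpolar a b)\<^sup>2 = 4 * qform a * qform b - 3"
proof -
  assume "is_basis a b"
  then have "(vdet a b)\<^sup>2 = 1"
    by (simp add: is_basis_def abs_square_eq_1)
  moreover have "4 * qform a * qform b - (qpolar a b)\<^sup>2 = 3 * (vdet a b)\<^sup>2"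
    by (cases a; cases b) (simp add: algebra_simps power2_eq_square)
  ultimately show ?thesis by simp
qed

lemma odd_qpolar: "is_basis a b \<Longrightarrow> odd (qpolar a b)"
proof
  assume "is_basis a b" "even (qpolar a b)"
  then obtain k where "qpolar a b = 2 * k" by blast
  then have "4 * (qform a * qform b - k\<^sup>2) = 3"
    using qpolar_sq[OF \<open>is_basis a b\<close>] by (simp add: power2_eq_square algebra_simps)
  then show False by presburger
qed

lemma height_hexagon:
  assumes "is_basis a b"
  shows "height (hexagon a b) = 2 * (qform a + qform b + qform (vadd a b))"
proof -
  let ?M = "basis_mat a b"
  have "inj (mat_apply ?M)"
    using assms by (intro inj_mat_apply) (auto simp: mat_det_basis_mat is_basis_def)
  then have "height (hexagon a b) = (\<Sum>u\<in>unit_hexagon. qform (mat_apply ?M u))"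
    unfolding height_def hexagon_eq_act_unit[of a b] act_def by (simp add: sum.reindex inj_on_subset)
  also have "\<dots> = 2 * (qform a + qform b + qform (vadd a b))"
    by (cases a; cases b) (simp add: unit_hexagon_eq algebra_simps)
  finally show ?thesis .
qed

section \<open>The neighbours of a hexagon\<close>

definition flips :: "vec \<Rightarrow> vec \<Rightarrow> vec set set" where
  "flips a b = {hexagon a (vneg b), hexagon a (vadd a b), hexagon b (vadd a b)}"

lemma is_basis_flips:
  assumes "is_basis a b"
  shows "is_basis a (vneg b)" "is_basis a (vadd a b)" "is_basis b (vadd a b)"
  using assms by (cases a; cases b; simp add: is_basis_def algebra_simps abs_minus_commute)+

lemma height_flips:
  assumes "is_basis a b"
  shows "height (hexagon a (vneg b)) = height (hexagon a b) - 4 * qpolar a b"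
    and "height (hexagon a (vadd a b)) = height (hexagon a b) + 4 * (2 * qform a + qpolar a b)"
    and "height (hexagon b (vadd a b)) = height (hexagon a b) + 4 * (2 * qform b + qpolar a b)"
  using assms is_basis_flips[OF assms]
  by (simp_all add: height_hexagon; cases a; cases b; simp add: algebra_simps)+

lemma act_flips: "act M ` flips u v = flips (mat_apply M u) (mat_apply M v)"
  by (simp add: flips_def act_hexagon mat_apply_vneg mat_apply_vadd)

lemma unit_hexagon_vertex_pair:
  assumes "u \<in> unit_hexagon" "v \<in> unit_hexagon" "v \<noteq> u" "v \<noteq> vneg u"
  shows "unit_hexagon \<in> {hexagon u v, hexagon u (vneg v)}"
    and "{hexagon u v, hexagon u (vneg v)} \<subseteq> insert unit_hexagon (flips (1, 0) (0, 1))"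
  using assms unfolding unit_hexagon_eq flips_def
  by (elim insertE emptyE; simp add: hexagon_def set_eq_subset)+

lemma hexagon_vertex_pair:
  assumes "is_basis a b" "s \<in> hexagon a b" "m \<in> hexagon a b" "m \<noteq> s" "m \<noteq> vneg s"
  shows "hexagon a b \<in> {hexagon s m, hexagon s (vneg m)}"
    and "{hexagon s m, hexagon s (vneg m)} \<subseteq> insert (hexagon a b) (flips a b)"
proof -
  let ?M = "basis_mat a b"
  obtain u v where uv: "u \<in> unit_hexagon" "v \<in> unit_hexagon" "s = mat_apply ?M u" "m = mat_apply ?M v"
    using assms(2,3) unfolding hexagon_eq_act_unit[of a b] act_def by blast
  then have "v \<noteq> u" "v \<noteq> vneg u"
    using assms(4,5) by (auto simp: mat_apply_vneg)
  note unit = unit_hexagon_vertex_pair[OF uv(1,2) this]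
  have eqs: "hexagon s m = act ?M (hexagon u v)" "hexagon s (vneg m) = act ?M (hexagon u (vneg v))"
    "flips a b = act ?M ` flips (1, 0) (0, 1)" "hexagon a b = act ?M unit_hexagon"
    by (simp_all only: uv act_hexagon mat_apply_vneg act_flips mat_apply_basis_mat)
  show "hexagon a b \<in> {hexagon s m, hexagon s (vneg m)}"
    using unit(1) unfolding eqs by auto
  show "{hexagon s m, hexagon s (vneg m)} \<subseteq> insert (hexagon a b) (flips a b)"
    using unit(2) unfolding eqs by auto
qed

lemma height_flip_ne:
  assumes "is_basis a b" "K \<in> flips a b"
  shows "height K \<noteq> height (hexagon a b)"
proof -
  have "odd (qpolar a b)" "odd (2 * qform a + qpolar a b)" "odd (2 * qform b + qpolar a b)"
    using odd_qpolar[OF assms(1)] by auto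
  then have "qpolar a b \<noteq> 0" "2 * qform a + qpolar a b \<noteq> 0" "2 * qform b + qpolar a b \<noteq> 0"
    by (metis even_zero)+
  then show ?thesis
    using assms(2) height_flips[OF assms(1)] unfolding flips_def by auto
qed

lemma hexagon_vneg_closed: "v \<in> hexagon a b \<Longrightarrow> vneg v \<in> hexagon a b"
  by (auto simp: hexagon_def)

lemma adj_hexagon_iff:
  assumes "is_basis a b"
  shows "adj (hexagon a b) K \<longleftrightarrow> K \<in> flips a b"
proof
  assume "adj (hexagon a b) K"
  then obtain \<sigma> \<mu> c d where K: "is_basis c d" "K = hexagon c d" "hexagon a b \<noteq> K"
    and \<sigma>\<mu>: "{\<sigma>, vneg \<sigma>, \<mu>, vneg \<mu>} \<subseteq> hexagon a b \<inter> K" "\<mu> \<noteq> \<sigma>" "\<mu> \<noteq> vneg \<sigma>"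
    unfolding adj_def admissible_def by blast
  have "K \<in> {hexagon \<sigma> \<mu>, hexagon \<sigma> (vneg \<mu>)}"
    using hexagon_vertex_pair(1)[OF K(1), of \<sigma> \<mu>] \<sigma>\<mu> K(2) by auto
  moreover have "{hexagon \<sigma> \<mu>, hexagon \<sigma> (vneg \<mu>)} \<subseteq> insert (hexagon a b) (flips a b)"
    using hexagon_vertex_pair(2)[OF assms, of \<sigma> \<mu>] \<sigma>\<mu> by auto
  ultimately show "K \<in> flips a b"
    using K(3) by auto
next
  have flip_adj: "adj (hexagon a b) (hexagon \<sigma> \<tau>)"
    if "is_basis \<sigma> \<tau>" "height (hexagon \<sigma> \<tau>) \<noteq> height (hexagon a b)"
       "\<sigma> \<in> hexagon a b" "\<tau> \<in> hexagon a b" for \<sigma> \<tau>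
  proof -
    have "{\<sigma>, vneg \<sigma>, \<tau>, vneg \<tau>} \<subseteq> hexagon a b \<inter> hexagon \<sigma> \<tau>"
      using that(3,4) hexagon_vneg_closed[of _ a b] by (auto simp: hexagon_def)
    then show ?thesis
      unfolding adj_def admissible_def using that(1,2) assms is_basis_not_parallel by metis
  qed
  have "a \<in> hexagon a b" "b \<in> hexagon a b" "vneg b \<in> hexagon a b" "vadd a b \<in> hexagon a b"
    by (simp_all add: hexagon_def)
  then have "adj (hexagon a b) (hexagon a (vneg b))" "adj (hexagon a b) (hexagon a (vadd a b))"
    "adj (hexagon a b) (hexagon b (vadd a b))"
    using is_basis_flips[OF assms] height_flip_ne[OF assms] by (auto simp: flips_def intro!: flip_adj)
  then show "K \<in> flips a b \<Longrightarrow> adj (hexagon a b) K"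
    unfolding flips_def by blast
qed

lemma height_adj_ne: "adj H K \<Longrightarrow> height H \<noteq> height K"
  by (metis adj_def adj_hexagon_iff admissible_def height_flip_ne)

lemma lower_neighbour_unique:
  assumes "adj H K" "adj H K'" "height K < height H" "height K' < height H"
  shows "K = K'"
proof -
  obtain a b where ab: "is_basis a b" "H = hexagon a b"
    using assms(1) unfolding adj_def admissible_def by blast
  have "qform a \<ge> 0" "qform b \<ge> 0" "qform a + qform b + qpolar a b \<ge> 0"
    using qform_nonneg[of a] qform_nonneg[of b] qform_nonneg[of "vadd a b"] by (simp_all add: qform_vadd)
  moreover have "K \<in> flips a b" "K' \<in> flips a b"
    using assms(1,2) adj_hexagon_iff[OF ab(1)] ab(2) by auto
  ultimately show ?thesis
    using assms(3,4) height_flips[OF ab(1)] unfolding ab(2) flips_def by auto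
qed

text \<open>For \<open>p = qform a\<close>, \<open>q = qform b\<close>, \<open>t = qpolar a b\<close> the three flips change the height by
  \<open>-4t\<close>, \<open>4(2p + t)\<close> and \<open>4(2q + t)\<close>; the hypotheses say that none of them lowers it.\<close>

lemma reduced_form_values:
  fixes p q t :: int
  assumes "odd t" "t \<le> 0" "2 * p + t \<ge> 0" "2 * q + t \<ge> 0" "t\<^sup>2 = 4 * p * q - 3"
  shows "p = 1 \<and> q = 1 \<and> t = -1"
proof -
  have ordered: "p = 1 \<and> q = 1 \<and> t = -1"
    if "p \<le> q" "2 * p + t \<ge> 0" "t\<^sup>2 = 4 * p * q - 3" for p q
  proof -
    have "2 * p + t \<ge> 1" "t \<le> -1"
      using that(2) assms(1,2) by presburger+
    then have "(- t)\<^sup>2 \<le> (2 * p - 1)\<^sup>2"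
      by (intro power_mono) auto
    then have "p * (q - p + 1) \<le> 1"
      using that(3) by (simp add: power2_eq_square algebra_simps)
    moreover have "p \<ge> 1" "q - p + 1 \<ge> 1"
      using that(1) \<open>2 * p + t \<ge> 1\<close> \<open>t \<le> -1\<close> by linarith+
    ultimately have "p = 1" "q = 1"
      using mult_mono[of 1 p 1 "q - p + 1"] mult_le_cancel_left1[of p "q - p + 1"] by auto
    then have "t\<^sup>2 = 1"
      using that(3) by simp
    then show ?thesis
      using \<open>p = 1\<close> \<open>q = 1\<close> \<open>t \<le> -1\<close> by (auto simp: power2_eq_1_iff)
  qed
  show ?thesis
    using ordered[of p q] ordered[of q p] assms(3-5) by (cases "p \<le> q") (simp_all add: mult.commute)
qed

lemma hexagon_eq_W0:
  assumes "qform a = 1" "qform b = 1" "qpolar a b = -1"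
  shows "hexagon a b = W0"
proof -
  have "a \<in> W0" "b \<in> W0"
    using assms(1,2) qform_eq_1 by blast+
  then show ?thesis
    using assms(3) unfolding W0_def by (elim insertE emptyE; simp add: hexagon_def set_eq_subset)
qed

lemma lower_neighbour_exists:
  assumes "admissible H" "H \<noteq> W0"
  obtains K where "adj H K" "height K < height H"
proof -
  obtain a b where ab: "is_basis a b" "H = hexagon a b"
    using assms(1) unfolding admissible_def by blast
  have "\<exists>K \<in> flips a b. height K < height H"
  proof (rule ccontr)
    assume "\<not> ?thesis"
    then have "qpolar a b \<le> 0" "2 * qform a + qpolar a b \<ge> 0" "2 * qform b + qpolar a b \<ge> 0"
      using height_flips[OF ab(1)] unfolding ab(2) flips_def by auto
    then have "qform a = 1 \<and> qform b = 1 \<and> qpolar a b = -1"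
      using reduced_form_values odd_qpolar[OF ab(1)] qpolar_sq[OF ab(1)] by blast
    then show False
      using hexagon_eq_W0 ab(2) assms(2) by blast
  qed
  then show ?thesis
    using that adj_hexagon_iff[OF ab(1)] ab(2) by blast
qed

lemma ends_butlast_tl:
  assumes "Suc 0 < length xs"
  shows "hd (butlast xs) = hd xs" "last (butlast xs) = xs ! (length xs - 2)"
    and "hd (tl xs) = xs ! 1" "last (tl xs) = last xs"
proof -
  obtain a ys where xs: "xs = a # ys" "ys \<noteq> []"
    using assms by (cases xs) auto
  show "hd (butlast xs) = hd xs" "hd (tl xs) = xs ! 1" "last (tl xs) = last xs"
    using xs by (simp_all add: hd_conv_nth)
  have "butlast xs \<noteq> []"
    using xs by simp
  then show "last (butlast xs) = xs ! (length xs - 2)"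
    using assms by (simp add: last_conv_nth nth_butlast numeral_2_eq_2)
qed

lemma adj_sym: "adj H K \<Longrightarrow> adj K H"
  unfolding adj_def by blast

lemma adj_irrefl: "adj H K \<Longrightarrow> H \<noteq> K"
  unfolding adj_def by blast

lemma adj_admissible: "adj H K \<Longrightarrow> admissible H \<and> admissible K"
  unfolding adj_def by blast

lemma is_walk_adj_nth: "is_walk P \<Longrightarrow> Suc i < length P \<Longrightarrow> adj (P ! i) (P ! Suc i)"
  by (simp add: is_walk_def)

lemma is_walk_adj_ends:
  assumes "is_walk P" "Suc 0 < length P"
  shows "adj (hd P) (P ! 1)" "adj (P ! (length P - 2)) (last P)"
proof -
  have "P \<noteq> []" "Suc (length P - 2) = length P - 1"
    using assms(2) by auto
  then show "adj (hd P) (P ! 1)" "adj (P ! (length P - 2)) (last P)"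
    using is_walk_adj_nth[OF assms(1), of 0] is_walk_adj_nth[OF assms(1), of "length P - 2"] assms(2)
    by (simp_all add: hd_conv_nth last_conv_nth)
qed

lemma is_walk_iff: "is_walk P \<longleftrightarrow> P \<noteq> [] \<and> (\<forall>V\<in>set P. admissible V) \<and> successively adj P"
  by (simp add: is_walk_def successively_conv_nth)

lemma is_walk_singleton [simp]: "is_walk [H] \<longleftrightarrow> admissible H"
  by (simp add: is_walk_iff)

lemma is_walk_append_iff:
  "P \<noteq> [] \<Longrightarrow> Q \<noteq> [] \<Longrightarrow> is_walk (P @ Q) \<longleftrightarrow> is_walk P \<and> is_walk Q \<and> adj (last P) (hd Q)"
  by (auto simp: is_walk_iff successively_append_iff)

lemma is_walk_Cons: "P \<noteq> [] \<Longrightarrow> is_walk (H # P) \<longleftrightarrow> adj H (hd P) \<and> is_walk P"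
  using is_walk_append_iff[of "[H]" P] adj_admissible by auto

lemma is_walk_take: "is_walk P \<Longrightarrow> 0 < n \<Longrightarrow> is_walk (take n P)"
  using is_walk_append_iff[of "take n P" "drop n P"] by (cases "drop n P = []") (auto simp: is_walk_def)

lemma is_walk_drop: "is_walk P \<Longrightarrow> n < length P \<Longrightarrow> is_walk (drop n P)"
  using is_walk_append_iff[of "take n P" "drop n P"] by (cases "n = 0") (auto simp: is_walk_def)

lemma is_walk_tl: "is_walk P \<Longrightarrow> Suc 0 < length P \<Longrightarrow> is_walk (tl P)"
  using is_walk_drop[of P 1] by (simp add: drop_Suc)

lemma is_walk_butlast: "is_walk P \<Longrightarrow> Suc 0 < length P \<Longrightarrow> is_walk (butlast P)"
  using is_walk_take[of P "length P - 1"] by (simp add: butlast_conv_take)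

lemma is_walk_rev: "is_walk P \<Longrightarrow> is_walk (rev P)"
  by (auto simp: is_walk_iff adj_sym elim: successively_mono)

lemma is_walk_map:
  assumes "is_walk P" "\<And>H. admissible H \<Longrightarrow> admissible (f H)" "\<And>H K. adj H K \<Longrightarrow> adj (f H) (f K)"
  shows "is_walk (map f P)"
  using assms by (auto simp: is_walk_iff successively_map elim: successively_mono)

lemma is_walk_map_upt:
  assumes "\<And>i. admissible (f i)" "\<And>i. adj (f i) (f (Suc i))"
  shows "is_walk (map f [0..<Suc n])"
  using assms by (auto simp: is_walk_def simp del: upt_Suc)

definition non_backtracking :: "vec set list \<Rightarrow> bool" where
  "non_backtracking P \<longleftrightarrow> (\<forall>i. Suc (Suc i) < length P \<longrightarrow> P ! i \<noteq> P ! Suc (Suc i))"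

lemma non_backtracking_take: "non_backtracking P \<Longrightarrow> non_backtracking (take n P)"
  by (simp add: non_backtracking_def)

lemma non_backtracking_drop: "non_backtracking P \<Longrightarrow> non_backtracking (drop n P)"
  by (simp add: non_backtracking_def)

lemma non_backtracking_tl: "non_backtracking P \<Longrightarrow> non_backtracking (tl P)"
  using non_backtracking_drop[of P 1] by (simp add: drop_Suc)

lemma non_backtracking_butlast: "non_backtracking P \<Longrightarrow> non_backtracking (butlast P)"
  using non_backtracking_take[of P "length P - 1"] by (simp add: butlast_conv_take)

lemma non_backtracking_rev: "non_backtracking P \<Longrightarrow> non_backtracking (rev P)"
  unfolding non_backtracking_def
proof (intro allI impI)
  fix i assume nb: "\<forall>i. Suc (Suc i) < length P \<longrightarrow> P ! i \<noteq> P ! Suc (Suc i)"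
    and i: "Suc (Suc i) < length (rev P)"
  then have "P ! (length P - Suc (Suc (Suc i))) \<noteq> P ! Suc (Suc (length P - Suc (Suc (Suc i))))"
    by simp
  moreover have "Suc (Suc (length P - Suc (Suc (Suc i)))) = length P - Suc i"
    using i by simp
  ultimately show "rev P ! i \<noteq> rev P ! Suc (Suc i)"
    using i by (simp add: rev_nth)
qed

lemma non_backtracking_map_upt:
  "(\<And>i. f i \<noteq> f (Suc (Suc i))) \<Longrightarrow> non_backtracking (map f [0..<n])"
  by (simp add: non_backtracking_def)

lemma non_backtracking_Cons:
  "non_backtracking (H # P) \<longleftrightarrow> non_backtracking P \<and> (Suc 0 < length P \<longrightarrow> H \<noteq> P ! 1)"
  unfolding non_backtracking_def by (auto simp: nth_Cons split: nat.splits)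

section \<open>Non-backtracking walks and distance\<close>

text \<open>Along a non-backtracking walk the height cannot go up and then down: the two neighbours of
  a local maximum would both be lower neighbours, hence equal.\<close>

lemma non_backtracking_ascent:
  assumes "is_walk P" "non_backtracking P" "Suc 0 < length P" "height (P ! 0) < height (P ! 1)"
  shows "Suc j < length P \<Longrightarrow> height (P ! j) < height (P ! Suc j) \<and> height (P ! 0) < height (P ! Suc j)"
proof (induction j)
  case 0
  then show ?case using assms(4) by simp
next
  case (Suc j)
  then have IH: "height (P ! j) < height (P ! Suc j)" "height (P ! 0) < height (P ! Suc j)"
    by simp_all
  have "adj (P ! Suc j) (P ! j)" "adj (P ! Suc j) (P ! Suc (Suc j))"
    using Suc.prems assms(1) adj_sym by (auto simp: is_walk_def)
  moreover have "P ! j \<noteq> P ! Suc (Suc j)"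
    using Suc.prems assms(2) by (simp add: non_backtracking_def)
  ultimately have "height (P ! Suc j) < height (P ! Suc (Suc j))"
    using IH(1) height_adj_ne lower_neighbour_unique by (metis linorder_neqE)
  with IH(2) show ?case by simp
qed

lemma first_step_descends:
  assumes "is_walk P" "non_backtracking P" "Suc 0 < length P" "height (last P) \<le> height (hd P)"
  shows "height (P ! 1) < height (hd P)"
proof -
  have "P \<noteq> []" "Suc (length P - 2) = length P - 1" "Suc (length P - 2) < length P"
    using assms(3) by auto
  then have "hd P = P ! 0" "last P = P ! Suc (length P - 2)"
    by (simp_all add: hd_conv_nth last_conv_nth)
  then have "\<not> height (P ! 0) < height (P ! 1)"
    using non_backtracking_ascent[OF assms(1-3) _ \<open>Suc (length P - 2) < length P\<close>] assms(4)
    by auto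
  then show ?thesis
    using height_adj_ne is_walk_adj_ends(1)[OF assms(1,3)] \<open>hd P = P ! 0\<close> by fastforce
qed

lemma first_steps_agree:
  assumes "is_walk P" "non_backtracking P" "is_walk Q" "non_backtracking Q"
    and "Suc 0 < length P" "Suc 0 < length Q" "hd P = hd Q" "last P = last Q"
    and "height (last P) \<le> height (hd P)"
  shows "P ! 1 = Q ! 1"
proof -
  have "height (P ! 1) < height (hd P)" "height (Q ! 1) < height (hd P)"
    using first_step_descends[OF assms(1,2,5)] first_step_descends[OF assms(3,4,6)] assms(7-9)
    by simp_all
  moreover have "adj (hd P) (P ! 1)" "adj (hd P) (Q ! 1)"
    using is_walk_adj_ends(1)[OF assms(1,5)] is_walk_adj_ends(1)[OF assms(3,6)] assms(7) by simp_all
  ultimately show ?thesis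
    using lower_neighbour_unique by blast
qed

lemma last_steps_agree:
  assumes "is_walk P" "non_backtracking P" "is_walk Q" "non_backtracking Q"
    and "Suc 0 < length P" "Suc 0 < length Q" "hd P = hd Q" "last P = last Q"
    and "height (hd P) \<le> height (last P)"
  shows "P ! (length P - 2) = Q ! (length Q - 2)"
proof -
  have "P \<noteq> []" "Q \<noteq> []"
    using assms(5,6) by auto
  then have "rev P ! 1 = rev Q ! 1"
    using first_steps_agree[OF is_walk_rev[OF assms(1)] non_backtracking_rev[OF assms(2)]
        is_walk_rev[OF assms(3)] non_backtracking_rev[OF assms(4)]] assms(5-9)
    by (simp add: hd_rev last_rev)
  then show ?thesis
    using assms(5,6) by (simp add: rev_nth numeral_2_eq_2)
qed

lemma non_backtracking_closed_walk:
  assumes "is_walk P" "non_backtracking P" "hd P = last P"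
  shows "length P = 1"
  using assms
proof (induction "length P" arbitrary: P rule: less_induct)
  case less
  have "P \<noteq> []"
    using less.prems(1) by (simp add: is_walk_def)
  show ?case
  proof (rule ccontr)
    assume "length P \<noteq> 1"
    then have len: "Suc 0 < length P"
      using \<open>P \<noteq> []\<close> by (cases P) auto
    have ends: "P ! 0 = P ! (length P - 1)"
      using less.prems(3) \<open>P \<noteq> []\<close> by (simp add: hd_conv_nth last_conv_nth)
    have "length P \<noteq> 2"
      using adj_irrefl[of "P ! 0" "P ! 1"] less.prems(1) ends by (auto simp: is_walk_def)
    moreover have "length P \<noteq> 3"
      using less.prems(2) ends by (auto simp: non_backtracking_def numeral_2_eq_2 numeral_3_eq_3)
    ultimately have len4: "4 \<le> length P"
      using len by linarith
    text \<open>The walk and its reverse leave the base point through the same neighbour.\<close>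
    have "Suc 0 < length (rev P)" "hd P = hd (rev P)" "last P = last (rev P)"
      "height (last P) \<le> height (hd P)"
      using len less.prems(3) \<open>P \<noteq> []\<close> by (simp_all add: hd_rev last_rev)
    then have "P ! 1 = rev P ! 1"
      using first_steps_agree[OF less.prems(1,2) is_walk_rev[OF less.prems(1)]
          non_backtracking_rev[OF less.prems(2)] len] by blast
    then have "P ! 1 = P ! (length P - 2)"
      using len by (simp add: rev_nth numeral_2_eq_2)
    define Q where "Q = take (length P - 2) (drop 1 P)"
    have "length Q = length P - 2"
      using len4 by (simp add: Q_def)
    moreover have "Suc (length P - 3) = length P - 2"
      using len4 by simp
    ultimately have "hd Q = P ! 1" "last Q = P ! (length P - 2)"
      using len4 by (simp_all add: Q_def hd_conv_nth last_conv_nth)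
    moreover have "is_walk Q" "non_backtracking Q"
      using len4 less.prems(1,2)
      by (simp_all add: Q_def is_walk_take is_walk_drop non_backtracking_take non_backtracking_drop)
    ultimately have "length Q = 1"
      using less.hyps[of Q] \<open>P ! 1 = P ! (length P - 2)\<close> \<open>length Q = length P - 2\<close> len4 by simp
    then show False
      using \<open>length Q = length P - 2\<close> len4 by simp
  qed
qed

theorem non_backtracking_walk_unique:
  assumes "is_walk P" "non_backtracking P" "is_walk Q" "non_backtracking Q"
    and "hd P = hd Q" "last P = last Q"
  shows "P = Q"
  using assms
proof (induction "length P" arbitrary: P Q rule: less_induct)
  case less
  have "P \<noteq> []" "Q \<noteq> []"
    using less.prems(1,3) by (simp_all add: is_walk_def)
  show ?case
  proof (cases "hd P = last P")
    case True
    moreover have "hd Q = last Q"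
      using True less.prems(5,6) by simp
    ultimately have "length P = 1" "length Q = 1"
      using non_backtracking_closed_walk less.prems(1-4) by blast+
    then have "P = [hd P]" "Q = [hd Q]"
      by (metis One_nat_def length_0_conv length_Suc_conv list.sel(1))+
    then show ?thesis
      using less.prems(5) by simp
  next
    case False
    have "xs \<noteq> [] \<Longrightarrow> hd xs \<noteq> last xs \<Longrightarrow> Suc 0 < length xs" for xs :: "vec set list"
      by (cases xs; cases "tl xs") auto
    then have len: "Suc 0 < length P" "Suc 0 < length Q"
      using False less.prems(5,6) \<open>P \<noteq> []\<close> \<open>Q \<noteq> []\<close> by simp_all
    show ?thesis
    proof (cases "height (hd P) \<le> height (last P)")
      case True
      then have "last (butlast P) = last (butlast Q)" "hd (butlast P) = hd (butlast Q)"
        using last_steps_agree[OF less.prems(1-4) len less.prems(5,6)] len less.prems(5)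
        by (simp_all add: ends_butlast_tl)
      then have "butlast P = butlast Q"
        using less.hyps[of "butlast P" "butlast Q"] less.prems len
        by (simp add: is_walk_butlast non_backtracking_butlast)
      then show ?thesis
        using less.prems(6) append_butlast_last_id \<open>P \<noteq> []\<close> \<open>Q \<noteq> []\<close> by metis
    next
      case False
      then have "hd (tl P) = hd (tl Q)" "last (tl P) = last (tl Q)"
        using first_steps_agree[OF less.prems(1-4) len less.prems(5,6)] len less.prems(6)
        by (simp_all add: ends_butlast_tl)
      then have "tl P = tl Q"
        using less.hyps[of "tl P" "tl Q"] less.prems len
        by (simp add: is_walk_tl non_backtracking_tl)
      then show ?thesis
        using less.prems(5) \<open>P \<noteq> []\<close> \<open>Q \<noteq> []\<close> by (metis list.collapse)
    qed
  qed
qed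

lemma is_walk_shortcut:
  assumes "is_walk P" "i < j" "j < length P" "P ! i = P ! j"
  shows "is_walk (take i P @ drop j P)" "hd (take i P @ drop j P) = hd P"
    and "last (take i P @ drop j P) = last P" "length (take i P @ drop j P) = length P - (j - i)"
proof -
  have "drop j P \<noteq> []" "hd (drop j P) = P ! i" "P \<noteq> []"
    using assms(3,4) by (auto simp: hd_drop_conv_nth)
  then have "hd P = P ! 0"
    by (simp add: hd_conv_nth)
  show "last (take i P @ drop j P) = last P" "length (take i P @ drop j P) = length P - (j - i)"
    using assms(2,3) by auto
  show "is_walk (take i P @ drop j P)" "hd (take i P @ drop j P) = hd P"
  proof (atomize (full), cases "i = 0")
    case True
    then show "is_walk (take i P @ drop j P) \<and> hd (take i P @ drop j P) = hd P"
      using assms \<open>hd (drop j P) = P ! i\<close> \<open>hd P = P ! 0\<close> is_walk_drop by simp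
  next
    case False
    then have "take i P \<noteq> []"
      using \<open>P \<noteq> []\<close> by simp
    moreover have "length (take i P) = i"
      using assms(2,3) by simp
    ultimately have "last (take i P) = P ! (i - 1)" "take i P \<noteq> []"
      using False by (simp_all add: last_conv_nth)
    moreover have "adj (P ! (i - 1)) (P ! i)"
      using is_walk_adj_nth[OF assms(1), of "i - 1"] False assms(2,3) by simp
    ultimately show "is_walk (take i P @ drop j P) \<and> hd (take i P @ drop j P) = hd P"
      using assms False \<open>drop j P \<noteq> []\<close> \<open>hd (drop j P) = P ! i\<close>
      by (simp add: is_walk_append_iff is_walk_take is_walk_drop)
  qed
qed

lemma is_walk_join:
  assumes "is_walk A" "is_walk B" "last A = hd B"
  shows "is_walk (A @ tl B)" "hd (A @ tl B) = hd A" "last (A @ tl B) = last B"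
    and "length (A @ tl B) = length A + length B - 1"
proof -
  have "A \<noteq> []" "B \<noteq> []"
    using assms(1,2) by (simp_all add: is_walk_def)
  then show "hd (A @ tl B) = hd A" "length (A @ tl B) = length A + length B - 1"
    by (simp_all add: Suc_le_eq)
  show "is_walk (A @ tl B)" "last (A @ tl B) = last B"
  proof (atomize (full), cases "tl B = []")
    case True
    then have "last B = hd B"
      using \<open>B \<noteq> []\<close> by (cases B) simp_all
    then show "is_walk (A @ tl B) \<and> last (A @ tl B) = last B"
      using assms True by simp
  next
    case False
    then have "adj (last A) (hd (tl B))" "is_walk (tl B)" "last (tl B) = last B"
      using assms \<open>B \<noteq> []\<close> is_walk_Cons[of "tl B" "hd B"] by (auto simp: last_tl)
    then show "is_walk (A @ tl B) \<and> last (A @ tl B) = last B"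
      using assms(1) False \<open>A \<noteq> []\<close> by (simp add: is_walk_append_iff)
  qed
qed

lemma dist_G_le: "is_walk P \<Longrightarrow> dist_G (hd P) (last P) \<le> length P - 1"
  unfolding dist_G_def by (rule Least_le) (auto simp: is_walk_def)

lemma walk_from_W0:
  assumes "admissible H"
  obtains P where "is_walk P" "hd P = W0" "last P = H"
  using assms
proof (induction "nat (height H)" arbitrary: H thesis rule: less_induct)
  case less
  show ?case
  proof (cases "H = W0")
    case True
    then show ?thesis
      using less.prems by (intro less.prems(1)[of "[H]"]) simp_all
  next
    case False
    obtain K where K: "adj H K" "height K < height H"
      using lower_neighbour_exists[OF less.prems(2) False] by blast
    moreover have "nat (height K) < nat (height H)"
      using K(2) height_nonneg[of K] by simp
    ultimately obtain P where "is_walk P" "hd P = W0" "last P = K"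
      using less.hyps adj_admissible by metis
    moreover have "P \<noteq> []"
      using \<open>is_walk P\<close> by (simp add: is_walk_def)
    ultimately have "is_walk (P @ [H])" "hd (P @ [H]) = W0" "last (P @ [H]) = H"
      using K(1) adj_sym less.prems(2) by (simp_all add: is_walk_append_iff)
    then show ?thesis
      by (rule less.prems(1))
  qed
qed

lemma obtain_geodesic:
  assumes "admissible H" "admissible K"
  obtains P where "is_walk P" "length P = Suc (dist_G H K)" "hd P = H" "last P = K"
proof -
  obtain A B where "is_walk A" "hd A = W0" "last A = H" "is_walk B" "hd B = W0" "last B = K"
    using walk_from_W0 assms by metis
  then have "is_walk (rev A @ tl B)" "hd (rev A @ tl B) = H" "last (rev A @ tl B) = K"
    using is_walk_join[of "rev A" B] is_walk_rev by (auto simp: hd_rev last_rev)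
  then have "\<exists>n P. is_walk P \<and> length P = Suc n \<and> hd P = H \<and> last P = K"
    by (metis is_walk_def length_greater_0_conv Suc_pred)
  then have "\<exists>P. is_walk P \<and> length P = Suc (dist_G H K) \<and> hd P = H \<and> last P = K"
    unfolding dist_G_def by (rule LeastI_ex)
  then show ?thesis
    using that by blast
qed

lemma geodesic_non_backtracking:
  assumes "is_walk P" "length P = Suc (dist_G (hd P) (last P))"
  shows "non_backtracking P"
  unfolding non_backtracking_def
proof (intro allI impI notI)
  fix i assume i: "Suc (Suc i) < length P" "P ! i = P ! Suc (Suc i)"
  then have "dist_G (hd P) (last P) \<le> length P - 3"
    using is_walk_shortcut[OF assms(1), of i "Suc (Suc i)"] dist_G_le by fastforce
  then show False
    using assms(2) i(1) by simp
qed

lemma dist_G_non_backtracking: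
  assumes "is_walk P" "non_backtracking P"
  shows "dist_G (hd P) (last P) = length P - 1"
proof -
  have "admissible (hd P)" "admissible (last P)"
    using assms(1) by (auto simp: is_walk_def)
  then obtain Q where "is_walk Q" "length Q = Suc (dist_G (hd P) (last P))" "hd Q = hd P" "last Q = last P"
    by (rule obtain_geodesic)
  moreover have "Q = P"
    using non_backtracking_walk_unique geodesic_non_backtracking assms calculation by metis
  ultimately show ?thesis
    by simp
qed

lemma dist_G_triangle:
  assumes "admissible H" "admissible K" "admissible L"
  shows "dist_G H L \<le> dist_G H K + dist_G K L"
proof -
  obtain A where "is_walk A" "length A = Suc (dist_G H K)" "hd A = H" "last A = K"
    using obtain_geodesic[OF assms(1,2)] .
  moreover obtain B where "is_walk B" "length B = Suc (dist_G K L)" "hd B = K" "last B = L"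
    using obtain_geodesic[OF assms(2,3)] .
  ultimately show ?thesis
    using is_walk_join[of A B] dist_G_le[of "A @ tl B"] by simp
qed

lemma dist_G_commute:
  assumes "admissible H" "admissible K"
  shows "dist_G H K = dist_G K H"
proof -
  have le: "dist_G K H \<le> dist_G H K" if adm: "admissible H" "admissible K" for H K
  proof -
    obtain A where "is_walk A" "length A = Suc (dist_G H K)" "hd A = H" "last A = K"
      using obtain_geodesic[OF adm] .
    then show ?thesis
      using dist_G_le[OF is_walk_rev[of A]] by (simp add: hd_rev last_rev)
  qed
  show ?thesis
    using le[OF assms] le[OF assms(2,1)] by simp
qed

lemma dist_G_self: "admissible H \<Longrightarrow> dist_G H H = 0"
  using dist_G_le[of "[H]"] by simp

lemma dist_G_eq_0_iff:
  assumes "admissible H" "admissible K"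
  shows "dist_G H K = 0 \<longleftrightarrow> H = K"
proof
  assume "dist_G H K = 0"
  moreover obtain A where "is_walk A" "length A = Suc (dist_G H K)" "hd A = H" "last A = K"
    using obtain_geodesic[OF assms] .
  ultimately show "H = K"
    by (auto simp: length_Suc_conv)
qed (use dist_G_self assms in simp)

text \<open>A geodesic from \<open>H\<close> to \<open>K\<close> either starts with the edge to \<open>H'\<close> or extends to a
  non-backtracking walk from \<open>H'\<close>.\<close>

lemma dist_G_adj_ne:
  assumes "adj H H'" "admissible K"
  shows "dist_G H K \<noteq> dist_G H' K"
proof -
  obtain P where P: "is_walk P" "length P = Suc (dist_G H K)" "hd P = H" "last P = K"
    using obtain_geodesic adj_admissible assms by blast
  then have nb: "non_backtracking P"
    using geodesic_non_backtracking by simp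
  show ?thesis
  proof (cases "Suc 0 < length P \<and> P ! 1 = H'")
    case True
    then have "dist_G (hd (tl P)) (last (tl P)) = length (tl P) - 1"
      using dist_G_non_backtracking is_walk_tl[OF P(1)] non_backtracking_tl[OF nb] by blast
    then have "dist_G H' K = length P - 2"
      using True P(4) by (simp add: ends_butlast_tl)
    then show ?thesis
      using P(2) True by auto
  next
    case False
    have "P \<noteq> []"
      using P(1) by (simp add: is_walk_def)
    then have "is_walk (H' # P)" "non_backtracking (H' # P)"
      using P(1,3) False adj_sym[OF assms(1)] nb by (auto simp: is_walk_Cons non_backtracking_Cons)
    then have "dist_G H' K = length P"
      using dist_G_non_backtracking P(4) \<open>P \<noteq> []\<close> by fastforce
    then show ?thesis
      using P(2) by simp
  qed
qed

section \<open>The action of SL(2, Z)\<close>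

lemma mat_apply_id [simp]: "mat_apply (1, 0, 0, 1) v = v"
  by (cases v) simp

lemma act_id: "act (1, 0, 0, 1) = id"
  by (simp add: act_def fun_eq_iff)

lemma act_mat_mult: "act (mat_mult A B) H = act A (act B H)"
  by (simp add: act_def mat_apply_mat_mult image_image)

lemma SL2_mat_mult: "A \<in> SL2 \<Longrightarrow> B \<in> SL2 \<Longrightarrow> mat_mult A B \<in> SL2"
  by (simp add: SL2_def mat_det_mat_mult)

lemma SL2_sl2_inv: "A \<in> SL2 \<Longrightarrow> sl2_inv A \<in> SL2"
  by (cases A) (simp add: SL2_def algebra_simps)

lemma act_sl2_inv:
  assumes "A \<in> SL2"
  shows "act (sl2_inv A) (act A H) = H" "act A (act (sl2_inv A) H) = H"
  using assms by (simp_all add: act_def image_image mat_apply_sl2_inv SL2_def)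

lemma inj_act: "A \<in> SL2 \<Longrightarrow> inj (act A)"
  by (metis act_sl2_inv(1) injI)

lemma admissible_act:
  assumes "A \<in> SL2" "admissible H"
  shows "admissible (act A H)"
proof -
  obtain a b where "is_basis a b" "H = hexagon a b"
    using assms(2) unfolding admissible_def by blast
  moreover have "is_basis (mat_apply A a) (mat_apply A b)"
    using assms(1) \<open>is_basis a b\<close> by (simp add: is_basis_def vdet_mat_apply SL2_def)
  ultimately show ?thesis
    unfolding admissible_def by (metis act_hexagon)
qed

lemma adj_act:
  assumes "A \<in> SL2" "adj H K"
  shows "adj (act A H) (act A K)"
proof -
  obtain \<sigma> \<mu> where H: "admissible H" "admissible K" "H \<noteq> K"
    "{\<sigma>, vneg \<sigma>, \<mu>, vneg \<mu>} \<subseteq> H \<inter> K" "\<mu> \<noteq> \<sigma>" "\<mu> \<noteq> vneg \<sigma>"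
    using assms(2) unfolding adj_def by blast
  have inj: "inj (mat_apply A)"
    using assms(1) by (intro inj_mat_apply) (simp add: SL2_def)
  show ?thesis
    unfolding adj_def
  proof (intro conjI exI)
    show "admissible (act A H)" "admissible (act A K)"
      using H(1,2) admissible_act[OF assms(1)] by simp_all
    show "act A H \<noteq> act A K"
      using H(3) inj_act[OF assms(1)] by (auto dest: injD)
    show "{mat_apply A \<sigma>, vneg (mat_apply A \<sigma>), mat_apply A \<mu>, vneg (mat_apply A \<mu>)}
        \<subseteq> act A H \<inter> act A K"
      using H(4) by (auto simp: act_def mat_apply_vneg[symmetric])
    show "mat_apply A \<mu> \<noteq> mat_apply A \<sigma>" "mat_apply A \<mu> \<noteq> vneg (mat_apply A \<sigma>)"
      using H(5,6) inj by (auto simp: mat_apply_vneg[symmetric] dest: injD)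
  qed
qed

lemma dist_G_act:
  assumes "A \<in> SL2"
  shows "dist_G (act A H) (act A K) = dist_G H K"
proof -
  have walks: "is_walk (map (act B) P)" if "B \<in> SL2" "is_walk P" for B P
    using is_walk_map that admissible_act adj_act by blast
  have "(\<exists>P. is_walk P \<and> length P = Suc n \<and> hd P = act A H \<and> last P = act A K) \<longleftrightarrow>
        (\<exists>P. is_walk P \<and> length P = Suc n \<and> hd P = H \<and> last P = K)" for n
  proof
    assume "\<exists>P. is_walk P \<and> length P = Suc n \<and> hd P = act A H \<and> last P = act A K"
    then obtain P where "is_walk P" "length P = Suc n" "hd P = act A H" "last P = act A K"
      by blast
    moreover have "P \<noteq> []"
      using \<open>is_walk P\<close> by (simp add: is_walk_def)
    ultimately show "\<exists>P. is_walk P \<and> length P = Suc n \<and> hd P = H \<and> last P = K"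
      using walks[OF SL2_sl2_inv[OF assms]] act_sl2_inv(1)[OF assms]
      by (intro exI[of _ "map (act (sl2_inv A)) P"]) (simp add: hd_map last_map)
  next
    assume "\<exists>P. is_walk P \<and> length P = Suc n \<and> hd P = H \<and> last P = K"
    then obtain P where "is_walk P" "length P = Suc n" "hd P = H" "last P = K"
      by blast
    moreover have "P \<noteq> []"
      using \<open>is_walk P\<close> by (simp add: is_walk_def)
    ultimately show "\<exists>P. is_walk P \<and> length P = Suc n \<and> hd P = act A H \<and> last P = act A K"
      using walks[OF assms]
      by (intro exI[of _ "map (act A) P"]) (simp add: hd_map last_map)
  qed
  then show ?thesis
    unfolding dist_G_def by simp
qed

lemma funpow_act_SL2:
  assumes "A \<in> SL2"
  obtains B where "B \<in> SL2" "act A ^^ k = act B"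
proof (induction k arbitrary: thesis)
  case 0
  show ?case
    by (rule 0[of "(1, 0, 0, 1)"]) (simp_all add: SL2_def act_id)
next
  case (Suc k)
  then obtain B where "B \<in> SL2" "act A ^^ k = act B"
    by blast
  then show ?case
    using Suc.prems[of "mat_mult A B"] assms
    by (simp add: SL2_mat_mult act_mat_mult fun_eq_iff)
qed

lemma W0_eq_hexagon: "W0 = hexagon (1, 0) (-1, 1)"
  by (auto simp: W0_def hexagon_def)

lemma admissible_W0: "admissible W0"
  unfolding W0_eq_hexagon admissible_def is_basis_def by force

lemma SL2_transitive:
  assumes "admissible H"
  obtains B where "B \<in> SL2" "H = act B W0"
proof -
  have "\<exists>B\<in>SL2. hexagon a b = act B W0" if "vdet a b = 1" for a b
  proof -
    have "basis_mat a (vadd a b) \<in> SL2"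
      using that by (cases a; cases b) (simp add: SL2_def algebra_simps)
    moreover have "act (basis_mat a (vadd a b)) W0 = hexagon a b"
      by (cases a; cases b) (simp add: W0_eq_hexagon act_hexagon)
    ultimately show ?thesis
      by metis
  qed
  moreover obtain a b where ab: "is_basis a b" "H = hexagon a b"
    using assms unfolding admissible_def by blast
  moreover have "vdet a b = 1 \<or> vdet b a = 1"
    using ab(1) unfolding is_basis_def by (cases a; cases b) (auto simp: abs_if algebra_simps split: if_splits)
  ultimately show ?thesis
    using that hexagon_commute by metis
qed

section \<open>Minimal matrices\<close>

lemma cplx_conjugate:
  assumes "A \<in> SL2" "B \<in> SL2"
  shows "cplx (mat_mult (mat_mult (sl2_inv B) A) B) = dist_G (act B W0) (act A (act B W0))"
proof -
  have "cplx (mat_mult (mat_mult (sl2_inv B) A) B) = dist_G W0 (act (sl2_inv B) (act A (act B W0)))"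
    by (simp add: cplx_def act_mat_mult)
  also have "\<dots> = dist_G (act B W0) (act A (act B W0))"
    using dist_G_act[OF assms(2)] act_sl2_inv(2)[OF assms(2)] by metis
  finally show ?thesis .
qed

lemma minimal_iff_displacement:
  assumes "A \<in> SL2"
  shows "minimal A \<longleftrightarrow> (\<forall>H. admissible H \<longrightarrow> cplx A \<le> dist_G H (act A H))"
proof
  assume "minimal A"
  show "\<forall>H. admissible H \<longrightarrow> cplx A \<le> dist_G H (act A H)"
  proof (intro allI impI)
    fix H assume "admissible H"
    then obtain B where "B \<in> SL2" "H = act B W0"
      by (rule SL2_transitive)
    then show "cplx A \<le> dist_G H (act A H)"
      using \<open>minimal A\<close> cplx_conjugate[OF assms] unfolding minimal_def by metis
  qed
next
  assume "\<forall>H. admissible H \<longrightarrow> cplx A \<le> dist_G H (act A H)"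
  then show "minimal A"
    unfolding minimal_def using cplx_conjugate[OF assms] admissible_act admissible_W0 by simp
qed

lemma minimal_if_cplx_le_1:
  assumes "A \<in> SL2" "cplx A \<le> 1"
  shows "minimal A"
  unfolding minimal_iff_displacement[OF assms(1)]
proof (intro allI impI)
  fix H assume H: "admissible H"
  show "cplx A \<le> dist_G H (act A H)"
  proof (rule ccontr)
    assume "\<not> ?thesis"
    then have "cplx A = 1" "act A H = H"
      using assms(2) dist_G_eq_0_iff[OF H admissible_act[OF assms(1) H]] by auto
    obtain P where "is_walk P" "length P = 2" "hd P = W0" "last P = act A W0"
      using obtain_geodesic[OF admissible_W0 admissible_act[OF assms(1) admissible_W0]]
        \<open>cplx A = 1\<close> unfolding cplx_def by (metis one_add_one plus_1_eq_Suc)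
    moreover have "P ! 0 = W0"
      using \<open>hd P = W0\<close> \<open>length P = 2\<close> by (cases P) auto
    ultimately have "adj W0 (act A W0)"
      using is_walk_adj_ends(2)[of P] by simp
    text \<open>\<open>A\<close> fixes \<open>H\<close>, so \<open>W0\<close> and its neighbour \<open>A W0\<close> would be equally far from \<open>H\<close>.\<close>
    moreover have "dist_G (act A W0) H = dist_G W0 H"
      using dist_G_act[OF assms(1), of W0 H] \<open>act A H = H\<close> by simp
    ultimately show False
      using dist_G_adj_ne H by metis
  qed
qed

lemma not_minimal_if_backtracking:
  assumes "A \<in> SL2" "is_walk P" "length P = Suc (cplx A)" "1 < cplx A"
    and "P ! (cplx A - 1) = act A (P ! 1)"
  shows "\<not> minimal A"
proof
  assume "minimal A"
  let ?Q = "take (cplx A - 1) (drop 1 P)"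
  have "Suc (cplx A - 2) = cplx A - 1"
    using assms(4) by simp
  then have "is_walk ?Q" "length ?Q = cplx A - 1" "hd ?Q = P ! 1" "last ?Q = act A (P ! 1)"
    using assms by (simp_all add: is_walk_take is_walk_drop hd_conv_nth last_conv_nth numeral_2_eq_2)
  then have "dist_G (P ! 1) (act A (P ! 1)) < cplx A"
    using dist_G_le[of ?Q] assms(4) by simp
  moreover have "admissible (P ! 1)"
    using assms(2-4) by (simp add: is_walk_def)
  ultimately show False
    using \<open>minimal A\<close> minimal_iff_displacement[OF assms(1)] by fastforce
qed

lemma funpow_act:
  assumes "A \<in> SL2"
  shows "admissible H \<Longrightarrow> admissible ((act A ^^ k) H)"
    and "adj H K \<Longrightarrow> adj ((act A ^^ k) H) ((act A ^^ k) K)"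
    and "inj (act A ^^ k)"
    and "dist_G ((act A ^^ k) H) ((act A ^^ k) K) = dist_G H K"
  by (metis funpow_act_SL2[OF assms] admissible_act adj_act inj_act dist_G_act)+

text \<open>A walk \<open>P\<close> of length \<open>m\<close> from \<open>X\<close> to \<open>A X\<close>, followed by its translates under
  \<open>A\<close>, \<open>A\<^sup>2\<close>, \<dots>\<close>

definition periodic_walk :: "mat2 \<Rightarrow> nat \<Rightarrow> vec set list \<Rightarrow> nat \<Rightarrow> vec set" where
  "periodic_walk A m P i = (act A ^^ (i div m)) (P ! (i mod m))"

lemma periodic_walk_eq:
  assumes "length P = Suc m" "0 < m" "last P = act A (hd P)" "r \<le> m"
  shows "periodic_walk A m P (q * m + r) = (act A ^^ q) (P ! r)"
proof (cases "r < m")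
  case True
  then show ?thesis by (simp add: periodic_walk_def)
next
  case False
  have "P ! m = act A (P ! 0)"
    using assms(1,3) by (metis diff_Suc_1 hd_conv_nth last_conv_nth length_greater_0_conv zero_less_Suc)
  moreover have "periodic_walk A m P (q * m + r) = (act A ^^ q) (act A (P ! 0))"
    using False assms(2,4) by (simp add: periodic_walk_def funpow_Suc_right del: funpow.simps)
  ultimately show ?thesis
    using False assms(4) by simp
qed

lemma periodic_walk_shift:
  assumes "length P = Suc m" "0 < m" "last P = act A (hd P)" "i mod m + j \<le> m"
  shows "periodic_walk A m P (i + j) = (act A ^^ (i div m)) (P ! (i mod m + j))"
  using periodic_walk_eq[OF assms, of "i div m"] by (simp add: add.assoc[symmetric])

lemma periodic_walk_step:
  assumes A: "A \<in> SL2" and P: "is_walk P" "length P = Suc m" "0 < m" "last P = act A (hd P)"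
  shows "admissible (periodic_walk A m P i)"
    and "adj (periodic_walk A m P i) (periodic_walk A m P (Suc i))"
proof -
  have "i mod m < m"
    using P(3) by simp
  then have "P ! (i mod m) \<in> set P"
    using P(2) by (intro nth_mem) simp
  then show "admissible (periodic_walk A m P i)"
    using P(1) funpow_act(1)[OF A] by (simp add: periodic_walk_def is_walk_def)
  show "adj (periodic_walk A m P i) (periodic_walk A m P (Suc i))"
    using periodic_walk_shift[OF P(2-4), of i 0] periodic_walk_shift[OF P(2-4), of i 1]
      is_walk_adj_nth[OF P(1), of "i mod m"] P(2) \<open>i mod m < m\<close> funpow_act(2)[OF A] by simp
qed

lemma periodic_walk_no_backtrack:
  assumes A: "A \<in> SL2" and P: "non_backtracking P" "length P = Suc m" "0 < m" "last P = act A (hd P)"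
    and no_turn: "P ! (m - 1) \<noteq> act A (P ! 1)"
  shows "periodic_walk A m P i \<noteq> periodic_walk A m P (Suc (Suc i))"
proof -
  let ?f = "periodic_walk A m P" and ?q = "i div m" and ?r = "i mod m"
  have "?r < m"
    using P(3) by simp
  have eq0: "?f i = (act A ^^ ?q) (P ! ?r)"
    using periodic_walk_shift[OF P(2-4), of i 0] \<open>?r < m\<close> by simp
  show ?thesis
  proof (cases "Suc (Suc ?r) \<le> m")
    case True
    then have "P ! ?r \<noteq> P ! Suc (Suc ?r)"
      using P(1,2) by (simp add: non_backtracking_def)
    then show ?thesis
      using eq0 periodic_walk_shift[OF P(2-4), of i 2] True funpow_act(3)[OF A] by (simp add: inj_eq)
  next
    case False
    then have "?r = m - 1"
      using \<open>?r < m\<close> by linarith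
    then have "Suc (Suc i) = Suc ?q * m + 1"
      using div_mult_mod_eq[of i m] P(3) by (simp add: mult_Suc)
    then have "?f (Suc (Suc i)) = (act A ^^ ?q) (act A (P ! 1))"
      using periodic_walk_eq[OF P(2-4), of 1 "Suc ?q"] P(3) by (simp add: funpow_Suc_right del: funpow.simps)
    then show ?thesis
      using eq0 \<open>?r = m - 1\<close> no_turn funpow_act(3)[OF A] by (simp add: inj_eq)
  qed
qed

lemma dist_G_funpow_act:
  assumes A: "A \<in> SL2"
    and P: "is_walk P" "non_backtracking P" "length P = Suc m" "0 < m" "last P = act A (hd P)"
    and no_turn: "P ! (m - 1) \<noteq> act A (P ! 1)"
  shows "dist_G (hd P) ((act A ^^ k) (hd P)) = k * m"
proof -
  let ?L = "map (periodic_walk A m P) [0..<Suc (k * m)]"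
  have "is_walk ?L" "non_backtracking ?L"
    using is_walk_map_upt non_backtracking_map_upt
      periodic_walk_step[OF A P(1,3-5)] periodic_walk_no_backtrack[OF A P(2-5) no_turn] by blast+
  moreover have "hd P = P ! 0"
    using P(3) by (cases P) simp_all
  then have "hd ?L = hd P" "last ?L = (act A ^^ k) (hd P)"
    using periodic_walk_eq[OF P(3-5), of 0 0] periodic_walk_eq[OF P(3-5), of 0 k]
    by (simp_all add: hd_map last_map del: upt_Suc)
  ultimately show ?thesis
    using dist_G_non_backtracking[of ?L] by simp
qed

text \<open>A translation length is a lower bound for all displacements: \<open>k m\<close> is at most
  \<open>d(X, H) + d(H, A\<^sup>k H) + d(A\<^sup>k H, A\<^sup>k X) \<le> 2 d(X, H) + k d(H, A H)\<close> for every \<open>k\<close>.\<close>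

lemma translation_length_le_displacement:
  assumes A: "A \<in> SL2" and adm: "admissible X" "admissible H"
    and growth: "\<And>k. dist_G X ((act A ^^ k) X) = k * m"
  shows "m \<le> dist_G H (act A H)"
proof (rule ccontr)
  define d e where "d = dist_G X H" and "e = dist_G H (act A H)"
  assume "\<not> m \<le> dist_G H (act A H)"
  then have "Suc e \<le> m"
    by (simp add: e_def)
  have adm_k: "admissible ((act A ^^ k) Y)" if "admissible Y" for k Y
    using funpow_act(1)[OF A that] .
  have orbit: "dist_G H ((act A ^^ k) H) \<le> k * e" for k
  proof (induction k)
    case 0
    then show ?case using dist_G_self[OF adm(2)] by simp
  next
    case (Suc k)
    have "dist_G ((act A ^^ k) H) ((act A ^^ Suc k) H) = e"
      using funpow_act(4)[OF A, of k H "act A H"] by (simp add: e_def funpow_Suc_right del: funpow.simps)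
    then show ?case
      using Suc.IH dist_G_triangle[OF adm(2) adm_k[OF adm(2), of k] adm_k[OF adm(2), of "Suc k"]] by simp
  qed
  have "k * m \<le> d + k * e + d" for k
  proof -
    have "k * m \<le> dist_G X H + dist_G H ((act A ^^ k) H) + dist_G ((act A ^^ k) H) ((act A ^^ k) X)"
      using growth[of k] dist_G_triangle[OF adm(1,2) adm_k[OF adm(1), of k]]
        dist_G_triangle[OF adm(2) adm_k[OF adm(2), of k] adm_k[OF adm(1), of k]] by simp
    then show ?thesis
      using orbit[of k] funpow_act(4)[OF A] dist_G_commute[OF adm] by (simp add: d_def)
  qed
  from this[of "Suc (2 * d)"] \<open>Suc e \<le> m\<close> show False
    using mult_le_mono2[OF \<open>Suc e \<le> m\<close>, of "Suc (2 * d)"] by simp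
qed

lemma minimal_if_no_backtracking:
  assumes A: "A \<in> SL2" and P: "is_walk P" "length P = Suc (cplx A)" "hd P = W0" "last P = act A W0"
    and "0 < cplx A" and no_turn: "P ! (cplx A - 1) \<noteq> act A (P ! 1)"
  shows "minimal A"
proof -
  have "non_backtracking P"
    using geodesic_non_backtracking P by (simp add: cplx_def)
  then have "dist_G W0 ((act A ^^ k) W0) = k * cplx A" for k
    using dist_G_funpow_act[OF A P(1) _ P(2)] assms(6) no_turn P(3,4) by simp
  then show ?thesis
    unfolding minimal_iff_displacement[OF A]
    using translation_length_le_displacement[OF A admissible_W0] by blast
qed

theorem theorem7:
  fixes A :: mat2
  assumes "A \<in> SL2"
  shows "(cplx A \<le> 1 \<longrightarrow> minimal A) \<and>
         (\<forall>Vs. is_walk Vs \<and> length Vs = Suc (cplx A) \<and> hd Vs = W0 \<and> last Vs = act A W0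
              \<and> cplx A > 1 \<longrightarrow>
            (minimal A \<longleftrightarrow> Vs ! (cplx A - 1) \<noteq> act A (Vs ! 1)))"
  using minimal_if_cplx_le_1[OF assms] not_minimal_if_backtracking[OF assms]
    minimal_if_no_backtracking[OF assms] by fastforce

end
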